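(* Let $X$ (treatment) and $Y$ (effect) be binary variables, with values $x,x'$ and $y,y'$ respectively. Suppose we are given $m$ experimental samples and $n$ observational samples, and the experimental quantities $P(y_x),P(y_{x'})$ and the observational quantities $P(y), P(x,y),P(x,y'),P(x',y),P(x',y')$ are estimated by their sample frequencies. Then, for $0<\alpha<1$, the margin of error, in a $1-\alpha$ confidence interval, of each of the (estimated) Tian–Pearl bounds of PNS, $$\max\{0,\;P(y_x)-P(y_{x'}),\;P(y)-P(y_{x'}),\;P(y_x)-P(y)\}\le \mathrm{PNS}\le \min\{P(y_x),\;P(y'_{x'}),\;P(x,y)+P(x',y'),\;P(y_x)-P(y_{x'})+P(x,y')+P(x',y)\},$$ is at most $z_{1-\alpha/2}\left(\sqrt{\tfrac{1}{m}}+\sqrt{\tfrac{1}{n}}\right)$, where $z_{1-\alpha/2}$ is the $1-\alpha/2$ quantile of the standard normal distribution.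
   Context: Counterfactual notation: $y_x$ denotes the event "$Y$ would be $y$ had $X$ been $x$" (i.e. $Y_x=y$), and similarly $y_{x'}$, $y'_x$, $y'_{x'}$. Experimental data yield the causal effects $P(y_x)$, $P(y_{x'})$ (with $P(y'_{x'})=1-P(y_{x'})$); observational data yield the joint probabilities $P(x,y)$ etc. The probability of necessity and sufficiency is $\mathrm{PNS}=P(y_x,y'_{x'})$. For a probability $p$ estimated by the frequency $\hat p$ from $k$ samples (experimental quantities from the $m$ experimental samples, observational quantities from the $n$ observational samples), its margin of error in a $1-\alpha$ confidence interval is the (asymptotic normal) quantity $z_{1-\alpha/2}\sqrt{\hat p(1-\hat p)/k}$, and the margin of error of a sum or difference of such estimates is bounded by the sum of their margins of error. *)

theory Defs
  imports "HOL-Probability.Probability"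
begin

definition std_normal_cdf :: "real \<Rightarrow> real" where
  "std_normal_cdf t = measure (density lborel std_normal_density) {..t}"

definition moe :: "real \<Rightarrow> real \<Rightarrow> nat \<Rightarrow> real" where
  "moe z p k = z * sqrt (p * (1 - p) / real k)"

text \<open>Margin of error of the estimated Tian--Pearl lower bound
  max{0, P(y_x)-P(y_x'), P(y)-P(y_x'), P(y_x)-P(y)}: the bound equals one of the
  terms, whose margin of error is bounded by the sum of the margins of its summands;
  we take the largest of these.\<close>
definition pns_lower_moe ::
  "real \<Rightarrow> nat \<Rightarrow> nat \<Rightarrow> real \<Rightarrow> real \<Rightarrow> real \<Rightarrow> real" where
  "pns_lower_moe z m n pyx pyx' py =
     max 0 (max (moe z pyx m + moe z pyx' m)
                (max (moe z py n + moe z pyx' m) (moe z pyx m + moe z py n)))"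

definition pns_upper_moe ::
  "real \<Rightarrow> nat \<Rightarrow> nat \<Rightarrow> real \<Rightarrow> real \<Rightarrow> real \<Rightarrow> real \<Rightarrow> real \<Rightarrow> real \<Rightarrow> real" where
  "pns_upper_moe z m n pyx pyx' pxy pxy' px'y px'y' =
     max (moe z pyx m)
       (max (moe z (1 - pyx') m)
         (max (moe z pxy n + moe z px'y' n)
              (moe z pyx m + moe z pyx' m + moe z pxy' n + moe z px'y n)))"

end

theory Submission
  imports Defs
begin

text \<open>Since \<open>p (1 - p) \<le> 1/4\<close>, every margin of error from \<open>k\<close> samples is at most
  \<open>z / (2 \<surd>k)\<close>, provided \<open>z \<ge> 0\<close>. The margin of error of each Tian--Pearl bound is a sum of
  at most two experimental and at most two observational such margins, hence at most
  \<open>z (1/\<surd>m + 1/\<surd>n)\<close>. Finally \<open>z \<ge> 0\<close> because \<open>\<Phi>(z) = 1 - \<alpha>/2 > 1/2\<close>, while the symmetry of the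
  standard normal distribution gives \<open>\<Phi>(z) \<le> 1/2\<close> for \<open>z < 0\<close>.\<close>

abbreviation std_normal :: "real measure" where
  "std_normal \<equiv> density lborel std_normal_density"

lemma emeasure_std_normal_atMost_eq_atLeast:
  "emeasure std_normal {..t} = emeasure std_normal {-t..}"
proof -
  have "emeasure std_normal {..t} =
      (\<integral>\<^sup>+ x. ennreal (std_normal_density x) * indicator {..t} x \<partial>lborel)"
    by (simp add: emeasure_density)
  also have "\<dots> =
      (\<integral>\<^sup>+ x. ennreal (std_normal_density x) * indicator {..t} x \<partial>distr lborel borel uminus)"
    by (simp add: lborel_distr_uminus)
  also have "\<dots> = (\<integral>\<^sup>+ x. ennreal (std_normal_density (-x)) * indicator {..t} (-x) \<partial>lborel)"
    by (subst nn_integral_distr) auto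
  also have "\<dots> = (\<integral>\<^sup>+ x. ennreal (std_normal_density x) * indicator {-t..} x \<partial>lborel)"
    by (intro nn_integral_cong) (auto simp: normal_density_def indicator_def)
  also have "\<dots> = emeasure std_normal {-t..}"
    by (simp add: emeasure_density)
  finally show ?thesis .
qed

lemma std_normal_cdf_le_half:
  assumes "t < 0"
  shows "std_normal_cdf t \<le> 1 / 2"
proof -
  interpret prob_space std_normal
    by (rule prob_space_normal_density) simp
  have reflect: "std_normal_cdf t = prob {-t..}"
    using emeasure_std_normal_atMost_eq_atLeast[of t] by (simp add: std_normal_cdf_def measure_def)
  have "std_normal_cdf t + prob {-t..} = prob ({..t} \<union> {-t..})"
    unfolding std_normal_cdf_def using assms by (intro finite_measure_Union[symmetric]) auto
  also have "\<dots> \<le> 1"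
    by (rule prob_le_1)
  finally show ?thesis
    using reflect by simp
qed

lemma moe_le_half_sqrt:
  assumes "0 \<le> z"
  shows "moe z p k \<le> z / 2 * sqrt (1 / real k)"
proof -
  have "p * (1 - p) \<le> (1 / 2)\<^sup>2"
    using zero_le_power2[of "p - 1 / 2"] by (simp add: power2_eq_square algebra_simps)
  then have "p * (1 - p) / real k \<le> (1 / 2)\<^sup>2 * (1 / real k)"
    by (simp add: divide_right_mono)
  then have "sqrt (p * (1 - p) / real k) \<le> sqrt ((1 / 2)\<^sup>2 * (1 / real k))"
    by (rule real_sqrt_le_mono)
  also have "\<dots> = 1 / 2 * sqrt (1 / real k)"
    by (simp only: real_sqrt_mult real_sqrt_abs)
  finally have "z * sqrt (p * (1 - p) / real k) \<le> z * (1 / 2 * sqrt (1 / real k))"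
    using assms by (rule mult_left_mono)
  then show ?thesis
    by (simp add: moe_def)
qed

theorem theorem1:
  fixes m n :: nat and a b :: nat and c11 c10 c01 c00 :: nat
    and \<alpha> z :: real
  assumes "m > 0" and "n > 0"
    and "a \<le> m" and "b \<le> m"
    and "c11 + c10 + c01 + c00 = n"
    and "0 < \<alpha>" and "\<alpha> < 1"
    and "std_normal_cdf z = 1 - \<alpha> / 2"
  shows
    "let pyx = real a / real m; pyx' = real b / real m;
         pxy = real c11 / real n; pxy' = real c10 / real n;
         px'y = real c01 / real n; px'y' = real c00 / real n;
         py = pxy + px'y
     in pns_lower_moe z m n pyx pyx' py \<le> z * (sqrt (1 / real m) + sqrt (1 / real n))
      \<and> pns_upper_moe z m n pyx pyx' pxy pxy' px'y px'y'
          \<le> z * (sqrt (1 / real m) + sqrt (1 / real n))"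
proof -
  text \<open>The bound \<open>p (1 - p) \<le> 1/4\<close> holds for every real \<open>p\<close>.\<close>
  have "0 \<le> z"
    using std_normal_cdf_le_half[of z] assms(7,8) by force
  then have exp: "2 * moe z p m \<le> z * sqrt (1 / real m)"
    and obs: "2 * moe z p n \<le> z * sqrt (1 / real n)"
    and "0 \<le> z * sqrt (1 / real m)" "0 \<le> z * sqrt (1 / real n)" for p
    using moe_le_half_sqrt[of z p] by (simp_all add: mult.commute)
  then have "pns_lower_moe z m n p q r \<le> z * (sqrt (1 / real m) + sqrt (1 / real n))"
    and "pns_upper_moe z m n p q s t u v \<le> z * (sqrt (1 / real m) + sqrt (1 / real n))"
    for p q r s t u v
    unfolding pns_lower_moe_def pns_upper_moe_def max.bounded_iff distrib_left
    using exp[of p] exp[of q] exp[of "1 - q"] obs[of r] obs[of s] obs[of t] obs[of u] obs[of v]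
    by (intro conjI; linarith)+
  then show ?thesis
    unfolding Let_def by blast
qed

end
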